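(* For every $\boldsymbol{\mu}\in\Delta_\mathbb{N}$, letting $X_1,X_2,\dots$ be i.i.d. from $\boldsymbol{\mu}$ and $\widehat{\boldsymbol{\mu}}_m$ the empirical measure of $(X_1,\dots,X_m)$, the quantity $\frac1{\sqrt m}\|\widehat{\boldsymbol{\mu}}_m\|_{1/2}^{1/2}$ converges to $0$ both in $L_1$ and almost surely as $m\to\infty$.
   Context: $\Delta_\mathbb{N}$ is the set of probability distributions on $\mathbb{N}=\{1,2,\dots\}$. $\widehat{\boldsymbol{\mu}}_m(i)=\frac1m\sum_{t=1}^m\mathbb{I}\{X_t=i\}$. $\|\boldsymbol{\mu}\|_{1/2}=(\sum_i\sqrt{\boldsymbol{\mu}(i)})^2$. *)

theory Defs
  imports "HOL-Probability.Probability"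
begin

definition empirical :: "(nat \<Rightarrow> 'a \<Rightarrow> nat) \<Rightarrow> nat \<Rightarrow> 'a \<Rightarrow> nat \<Rightarrow> real" where
  "empirical X m \<omega> i = real (card {t \<in> {1..m}. X t \<omega> = i}) / real m"

definition half_norm :: "(nat \<Rightarrow> real) \<Rightarrow> real" where
  "half_norm p = (\<Sum>\<^sub>\<infinity> i\<in>UNIV. sqrt (p i)) ^ 2"

end

theory Submission
  imports Defs
begin

text \<open>
  Fix a cutoff K. The atoms i \<le> K contribute at most K + 1 to the square root of the
  1/2-norm of the empirical measure, and an atom i > K observed N times contributes
  sqrt (N / m) \<le> N / sqrt m. Hence the quantity in question is at most
  (K + 1) / sqrt m plus the empirical frequency of the tail {K<..}. By Hoeffding's inequality
  and Borel--Cantelli that frequency converges almost surely to the tail probability of the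
  common distribution, which is small for large K; this gives almost sure convergence to 0.
  Since the quantity is bounded by 2, convergence in L1 follows by dominated convergence.
\<close>

lemma sqrt_half_norm_eq_sum:
  assumes "finite S" and "\<And>i. i \<notin> S \<Longrightarrow> p i = 0" and "\<And>i. 0 \<le> p i"
  shows "sqrt (half_norm p) = (\<Sum>i\<in>S. sqrt (p i))"
proof -
  have "(\<Sum>\<^sub>\<infinity>i\<in>UNIV. sqrt (p i)) = (\<Sum>\<^sub>\<infinity>i\<in>S. sqrt (p i))"
    by (rule infsum_cong_neutral) (use assms(2) in auto)
  also have "\<dots> = (\<Sum>i\<in>S. sqrt (p i))"
    using assms(1) by simp
  finally show ?thesis
    unfolding half_norm_def using assms(3) by (simp add: sum_nonneg)
qed

lemma sum_card_fibres_greater: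
  fixes x :: "'a \<Rightarrow> nat"
  assumes "finite A"
  shows "(\<Sum>i\<in>x ` A \<inter> {K<..}. card {t\<in>A. x t = i}) = card {t\<in>A. K < x t}"
proof -
  have "{t\<in>A. K < x t} = (\<Union>i\<in>x ` A \<inter> {K<..}. {t\<in>A. x t = i})"
    by auto
  also have "card \<dots> = (\<Sum>i\<in>x ` A \<inter> {K<..}. card {t\<in>A. x t = i})"
    using assms by (intro card_UN_disjoint) auto
  finally show ?thesis ..
qed

lemma sqrt_of_nat_le: "sqrt (real n) \<le> real n"
proof -
  have "real n \<le> real n ^ 2"
    by (cases n) (auto simp: power2_eq_square)
  then have "sqrt (real n) \<le> sqrt (real n ^ 2)"
    by (rule real_sqrt_le_mono)
  then show ?thesis by simp
qed

lemma empirical_le_1: "empirical X m \<omega> i \<le> 1"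
proof -
  have "card {t\<in>{1..m}. X t \<omega> = i} \<le> card {1..m}"
    by (rule card_mono) auto
  then show ?thesis
    unfolding empirical_def by (cases "m = 0") (simp_all add: divide_le_eq_1)
qed

lemma empirical_sqrt_half_norm_le:
  assumes m: "m > 0"
  shows "sqrt (half_norm (empirical X m \<omega>)) / sqrt (real m)
    \<le> real (K + 1) / sqrt (real m) + real (card {t\<in>{1..m}. K < X t \<omega>}) / real m"
proof -
  define N where "N i = card {t\<in>{1..m}. X t \<omega> = i}" for i
  define S where "S = (\<lambda>t. X t \<omega>) ` {1..m} \<inter> {K<..}"
  let ?f = "\<lambda>i. sqrt (empirical X m \<omega> i)"
  have "sqrt (half_norm (empirical X m \<omega>)) = (\<Sum>i\<in>{..K} \<union> S. ?f i)"
    by (rule sqrt_half_norm_eq_sum) (auto simp: S_def empirical_def not_less)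
  also have "\<dots> = sum ?f {..K} + sum ?f S"
    by (rule sum.union_disjoint) (auto simp: S_def)
  finally have split: "sqrt (half_norm (empirical X m \<omega>)) = sum ?f {..K} + sum ?f S" .
  have "sum ?f {..K} \<le> real (K + 1)"
    using sum_mono[of "{..K}" ?f "\<lambda>_. 1"] by (simp add: empirical_le_1)
  then have low: "sum ?f {..K} / sqrt (real m) \<le> real (K + 1) / sqrt (real m)"
    by (simp add: divide_right_mono)
  have "?f i / sqrt (real m) \<le> real (N i) / real m" for i
  proof -
    have "?f i / sqrt (real m) = sqrt (real (N i)) / real m"
      using m by (simp add: empirical_def N_def real_sqrt_divide field_simps)
    also have "\<dots> \<le> real (N i) / real m"
      using m by (intro divide_right_mono) (auto simp: sqrt_of_nat_le)
    finally show ?thesis .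
  qed
  then have "sum ?f S / sqrt (real m) \<le> (\<Sum>i\<in>S. real (N i) / real m)"
    unfolding sum_divide_distrib by (rule sum_mono)
  also have "\<dots> = real (\<Sum>i\<in>S. N i) / real m"
    by (simp add: sum_divide_distrib)
  also have "\<dots> = real (card {t\<in>{1..m}. K < X t \<omega>}) / real m"
    unfolding S_def N_def sum_card_fibres_greater[OF finite_atLeastAtMost] ..
  finally show ?thesis
    unfolding split add_divide_distrib using low by linarith
qed

lemma empirical_sqrt_half_norm_nonneg: "0 \<le> sqrt (half_norm (empirical X m \<omega>)) / sqrt (real m)"
  by (simp add: half_norm_def)

lemma empirical_sqrt_half_norm_le_2: "sqrt (half_norm (empirical X m \<omega>)) / sqrt (real m) \<le> 2"
proof (cases "m = 0")
  case False
  then have m: "m > 0" by simp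
  have "card {t\<in>{1..m}. 0 < X t \<omega>} \<le> card {1..m}"
    by (rule card_mono) auto
  then have "real (card {t\<in>{1..m}. 0 < X t \<omega>}) / real m \<le> 1"
    using m by simp
  moreover have "real (0 + 1) / sqrt (real m) \<le> 1"
    using m by simp
  ultimately show ?thesis
    using empirical_sqrt_half_norm_le[OF m, of X \<omega> 0] by linarith
qed simp

lemma empirical_sqrt_half_norm_tendsto_zero:
  assumes q: "q \<longlonglongrightarrow> 0"
    and tails: "\<And>K. (\<lambda>m. real (card {t\<in>{1..m}. K < X t \<omega>}) / real m) \<longlonglongrightarrow> q K"
  shows "(\<lambda>m. sqrt (half_norm (empirical X m \<omega>)) / sqrt (real m)) \<longlonglongrightarrow> 0"
proof (rule tendstoI)
  fix e :: real assume "e > 0"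
  then have "eventually (\<lambda>K. q K < e / 3) sequentially"
    by (intro order_tendstoD(2)[OF q]) simp
  then obtain K where K: "q K < e / 3"
    by (auto simp: eventually_sequentially)
  have "(\<lambda>m. real (K + 1) / sqrt (real m)) \<longlonglongrightarrow> 0"
    by (intro tendsto_divide_0[OF tendsto_const] filterlim_at_top_imp_at_infinity
        filterlim_compose[OF sqrt_at_top filterlim_real_sequentially])
  then have "eventually (\<lambda>m. real (K + 1) / sqrt (real m) < e / 3) sequentially"
    by (rule order_tendstoD(2)) (use \<open>e > 0\<close> in simp)
  moreover have "eventually (\<lambda>m. real (card {t\<in>{1..m}. K < X t \<omega>}) / real m < q K + e / 3) sequentially"
    using \<open>e > 0\<close> by (intro order_tendstoD(2)[OF tails]) simp
  moreover have "eventually (\<lambda>m. m > 0) sequentially"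
    by (rule eventually_gt_at_top)
  ultimately show "eventually (\<lambda>m. dist (sqrt (half_norm (empirical X m \<omega>)) / sqrt (real m)) 0 < e) sequentially"
  proof eventually_elim
    case (elim m)
    then show ?case
      unfolding dist_real_def diff_zero abs_of_nonneg[OF empirical_sqrt_half_norm_nonneg]
      using empirical_sqrt_half_norm_le[OF elim(3), of X \<omega> K] K by linarith
  qed
qed

lemma borel_measurable_determined_by_finitely_many:
  fixes X :: "'i \<Rightarrow> 'a \<Rightarrow> 'b::countable" and f :: "'a \<Rightarrow> 'c::topological_space"
  assumes I: "finite I" and X: "\<And>t. t \<in> I \<Longrightarrow> X t \<in> M \<rightarrow>\<^sub>M count_space UNIV"
    and determined: "\<And>\<omega> \<omega>'. \<omega> \<in> space M \<Longrightarrow> \<omega>' \<in> space M \<Longrightarrow> (\<forall>t\<in>I. X t \<omega> = X t \<omega>') \<Longrightarrow> f \<omega> = f \<omega>'"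
  shows "f \<in> borel_measurable M"
proof -
  \<comment> \<open>f factors through the restriction of (X t) to I, whose values form a countable set.\<close>
  define L where "L \<omega> = restrict (\<lambda>t. X t \<omega>) I" for \<omega>
  define g where "g c = f (SOME \<omega>. \<omega> \<in> space M \<and> L \<omega> = c)" for c
  have countable: "countable (I \<rightarrow>\<^sub>E (UNIV :: 'b set))"
    using I by (simp add: countable_PiE)
  have "L \<in> M \<rightarrow>\<^sub>M count_space (I \<rightarrow>\<^sub>E UNIV)"
    unfolding measurable_count_space_eq_countable[OF countable]
  proof (intro conjI ballI)
    show "L \<in> space M \<rightarrow> I \<rightarrow>\<^sub>E UNIV"
      by (simp add: L_def)
    fix c assume c: "c \<in> I \<rightarrow>\<^sub>E (UNIV :: 'b set)"
    have "L -` {c} \<inter> space M = {\<omega>\<in>space M. \<forall>t\<in>I. X t \<omega> = c t}"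
      using c by (auto simp: L_def PiE_iff extensional_def restrict_def fun_eq_iff)
    also have "\<dots> \<in> sets M"
      using I X by (intro sets.sets_Collect_finite_All) measurable
    finally show "L -` {c} \<inter> space M \<in> sets M" .
  qed
  then have gL: "g \<circ> L \<in> borel_measurable M"
    by (rule measurable_comp) simp
  have "f \<omega> = (g \<circ> L) \<omega>" if \<omega>: "\<omega> \<in> space M" for \<omega>
  proof -
    define \<omega>' where "\<omega>' = (SOME \<omega>'. \<omega>' \<in> space M \<and> L \<omega>' = L \<omega>)"
    have \<omega>': "\<omega>' \<in> space M \<and> L \<omega>' = L \<omega>"
      unfolding \<omega>'_def by (rule someI_ex) (use \<omega> in blast)
    then have "\<forall>t\<in>I. X t \<omega> = X t \<omega>'"
      unfolding L_def by (metis restrict_apply')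
    then have "f \<omega> = f \<omega>'"
      using \<omega> \<omega>' by (intro determined) auto
    also have "\<dots> = (g \<circ> L) \<omega>"
      unfolding comp_def g_def \<omega>'_def ..
    finally show ?thesis .
  qed
  then show ?thesis
    using measurable_cong gL by blast
qed

lemma borel_measurable_empirical_sqrt_half_norm:
  assumes "\<And>t. t \<ge> 1 \<Longrightarrow> X t \<in> M \<rightarrow>\<^sub>M count_space UNIV"
  shows "(\<lambda>\<omega>. sqrt (half_norm (empirical X m \<omega>)) / sqrt (real m)) \<in> borel_measurable M"
proof -
  have "sqrt (half_norm (empirical X m \<omega>)) / sqrt (real m) = sqrt (half_norm (empirical X m \<omega>')) / sqrt (real m)"
    if "\<forall>t\<in>{1..m}. X t \<omega> = X t \<omega>'" for \<omega> \<omega>'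
  proof -
    have "{t\<in>{1..m}. X t \<omega> = i} = {t\<in>{1..m}. X t \<omega>' = i}" for i
      using that by auto
    then have "empirical X m \<omega> = empirical X m \<omega>'"
      unfolding empirical_def by simp
    then show ?thesis by simp
  qed
  then show ?thesis
    using assms by (intro borel_measurable_determined_by_finitely_many[where I = "{1..m}" and X = X]) auto
qed

context prob_space
begin

lemma prob_average_deviation_le:
  fixes Y :: "nat \<Rightarrow> 'a \<Rightarrow> real"
  assumes indep: "indep_vars (\<lambda>_. borel) Y {1..}"
    and distr: "\<And>t. t \<ge> 1 \<Longrightarrow> distr M borel (Y t) = distr M borel (Y 1)"
    and bounded: "AE \<omega> in M. Y 1 \<omega> \<in> {a..b}" and "a < b" and "0 \<le> e" and "m > 0"
  shows "prob {\<omega>\<in>space M. e \<le> \<bar>(\<Sum>t\<in>{1..m}. Y t \<omega>) / real m - expectation (Y 1)\<bar>}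
    \<le> 2 * exp (-2 * real m * e\<^sup>2 / (b - a)\<^sup>2)"
proof -
  have "Hoeffding_ineq_iid M {1..m} Y (Y 1) a b"
    unfolding Hoeffding_ineq_iid_def iid_interval_bounded_random_variables_def
      iid_interval_bounded_random_variables_axioms_def
  proof (intro conjI allI impI)
    show "prob_space M" "finite {1..m}"
      by (simp_all add: prob_space_axioms)
    show "indep_vars (\<lambda>_. borel) Y {1..m}"
      by (rule indep_vars_subset[OF indep]) auto
    show "random_variable borel (Y 1)"
      using indep unfolding indep_vars_def by (simp add: Ball_def)
    show "distr M borel (Y t) = distr M borel (Y 1)" if "t \<in> {1..m}" for t
      using that by (intro distr) simp
  qed (fact bounded)
  from Hoeffding_ineq_iid.Hoeffding_ineq_abs_ge'[OF this \<open>0 \<le> e\<close> \<open>a < b\<close>] \<open>m > 0\<close>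
  show ?thesis by simp
qed

lemma AE_eventually_average_deviation_less:
  fixes Y :: "nat \<Rightarrow> 'a \<Rightarrow> real"
  assumes indep: "indep_vars (\<lambda>_. borel) Y {1..}"
    and distr: "\<And>t. t \<ge> 1 \<Longrightarrow> distr M borel (Y t) = distr M borel (Y 1)"
    and bounded: "AE \<omega> in M. Y 1 \<omega> \<in> {a..b}" and "e > 0"
  shows "AE \<omega> in M. eventually
    (\<lambda>m. \<bar>(\<Sum>t\<in>{1..m}. Y t \<omega>) / real m - expectation (Y 1)\<bar> < e) sequentially"
proof -
  define A where "A m = {\<omega>\<in>space M. e \<le> \<bar>(\<Sum>t\<in>{1..m}. Y t \<omega>) / real m - expectation (Y 1)\<bar>}" for m
  \<comment> \<open>Widening the interval to [a, b + 1] makes it nondegenerate, as Hoeffding's inequality requires.\<close>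
  have "AE \<omega> in M. a \<le> b"
    using bounded by (rule eventually_mono) simp
  then have "a < b + 1"
    by simp
  have bounded': "AE \<omega> in M. Y 1 \<omega> \<in> {a..b + 1}"
    using bounded by (rule eventually_mono) simp
  have "Y t \<in> borel_measurable M" if "t \<ge> 1" for t
    using indep that unfolding indep_vars_def by (simp add: Ball_def)
  then have A_sets: "A m \<in> sets M" for m
    unfolding A_def by measurable
  define c where "c = exp (-2 * e\<^sup>2 / (b + 1 - a)\<^sup>2)"
  have A_bound: "norm (measure M (A m)) \<le> 2 * c ^ m" if "m \<ge> 1" for m
  proof -
    have "exp (-2 * real m * e\<^sup>2 / (b + 1 - a)\<^sup>2) = exp (real m * (-2 * e\<^sup>2 / (b + 1 - a)\<^sup>2))"
      by (simp add: mult_ac)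
    also have "\<dots> = c ^ m"
      unfolding c_def by (rule exp_of_nat_mult)
    finally show ?thesis
      using prob_average_deviation_le[OF indep distr bounded' \<open>a < b + 1\<close>, of e m] \<open>e > 0\<close> that
      unfolding A_def by simp
  qed
  have "summable (\<lambda>m. 2 * c ^ m)"
  proof (intro summable_mult summable_geometric)
    have "-2 * e\<^sup>2 / (b + 1 - a)\<^sup>2 < 0"
      using \<open>e > 0\<close> \<open>a < b + 1\<close> by (intro divide_neg_pos) auto
    then show "norm c < 1"
      unfolding c_def by simp
  qed
  then have "summable (\<lambda>m. measure M (A m))"
    using A_bound by (rule summable_comparison_test')
  then have "AE \<omega> in M. eventually (\<lambda>m. \<omega> \<in> space M - A m) sequentially"
    using A_sets by (intro borel_cantelli_AE1) (auto simp: less_top[symmetric])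
  then show ?thesis
    by (rule eventually_mono) (auto elim!: eventually_mono simp: A_def)
qed

lemma AE_average_tendsto_expectation:
  fixes Y :: "nat \<Rightarrow> 'a \<Rightarrow> real"
  assumes indep: "indep_vars (\<lambda>_. borel) Y {1..}"
    and distr: "\<And>t. t \<ge> 1 \<Longrightarrow> distr M borel (Y t) = distr M borel (Y 1)"
    and bounded: "AE \<omega> in M. Y 1 \<omega> \<in> {a..b}"
  shows "AE \<omega> in M. (\<lambda>m. (\<Sum>t\<in>{1..m}. Y t \<omega>) / real m) \<longlonglongrightarrow> expectation (Y 1)"
proof -
  have "AE \<omega> in M. \<forall>n. eventually
      (\<lambda>m. \<bar>(\<Sum>t\<in>{1..m}. Y t \<omega>) / real m - expectation (Y 1)\<bar> < inverse (Suc n)) sequentially"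
    unfolding AE_all_countable
    using AE_eventually_average_deviation_less[OF indep distr bounded] by simp
  then show ?thesis
  proof (rule eventually_mono)
    fix \<omega> assume close: "\<forall>n. eventually
      (\<lambda>m. \<bar>(\<Sum>t\<in>{1..m}. Y t \<omega>) / real m - expectation (Y 1)\<bar> < inverse (Suc n)) sequentially"
    show "(\<lambda>m. (\<Sum>t\<in>{1..m}. Y t \<omega>) / real m) \<longlonglongrightarrow> expectation (Y 1)"
    proof (rule tendstoI)
      fix e :: real assume "e > 0"
      then obtain n where n: "inverse (Suc n) < e"
        using reals_Archimedean by blast
      from close have "eventually
          (\<lambda>m. \<bar>(\<Sum>t\<in>{1..m}. Y t \<omega>) / real m - expectation (Y 1)\<bar> < inverse (Suc n)) sequentially" ..
      then show "eventually (\<lambda>m. dist ((\<Sum>t\<in>{1..m}. Y t \<omega>) / real m) (expectation (Y 1)) < e) sequentially"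
        by (rule eventually_mono) (use n in \<open>simp add: dist_real_def\<close>)
    qed
  qed
qed

lemma integral_abs_tendsto_zero_if_bounded:
  fixes f :: "nat \<Rightarrow> 'a \<Rightarrow> real"
  assumes measurable: "\<And>m. f m \<in> borel_measurable M"
    and bounded: "\<And>m. AE \<omega> in M. norm (f m \<omega>) \<le> B"
    and limit: "AE \<omega> in M. (\<lambda>m. f m \<omega>) \<longlonglongrightarrow> 0"
  shows "(\<lambda>m. \<integral>\<omega>. \<bar>f m \<omega>\<bar> \<partial>M) \<longlonglongrightarrow> 0"
proof -
  have "(\<lambda>m. \<integral>\<omega>. \<bar>f m \<omega>\<bar> \<partial>M) \<longlonglongrightarrow> (\<integral>\<omega>. 0 \<partial>M)"
  proof (rule integral_dominated_convergence[where w = "\<lambda>_. B"])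
    show "(\<lambda>\<omega>. \<bar>f m \<omega>\<bar>) \<in> borel_measurable M" for m
      using measurable[of m] by measurable
    show "AE \<omega> in M. (\<lambda>m. \<bar>f m \<omega>\<bar>) \<longlonglongrightarrow> 0"
      using limit by (rule eventually_mono) (rule tendsto_rabs_zero)
    show "AE \<omega> in M. norm \<bar>f m \<omega>\<bar> \<le> B" for m
      using bounded[of m] by simp
  qed simp_all
  then show ?thesis
    by simp
qed

lemma prob_greater_tendsto_zero:
  fixes Z :: "'a \<Rightarrow> nat"
  assumes "Z \<in> M \<rightarrow>\<^sub>M count_space UNIV"
  shows "(\<lambda>K. prob {\<omega>\<in>space M. K < Z \<omega>}) \<longlonglongrightarrow> 0"
proof -
  have "(\<lambda>K. prob {\<omega>\<in>space M. K < Z \<omega>}) \<longlonglongrightarrow> prob (\<Inter>K. {\<omega>\<in>space M. K < Z \<omega>})"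
    using assms by (intro finite_Lim_measure_decseq) (auto simp: decseq_def)
  also have "(\<Inter>K. {\<omega>\<in>space M. K < Z \<omega>}) = {}"
    by (auto dest: spec[of _ "Z _"])
  finally show ?thesis
    by simp
qed

lemma AE_tail_frequency_tendsto:
  fixes X :: "nat \<Rightarrow> 'a \<Rightarrow> nat"
  assumes indep: "indep_vars (\<lambda>_. count_space UNIV) X {1..}"
    and distr: "\<And>t. t \<ge> 1 \<Longrightarrow> distr M (count_space UNIV) (X t) = distr M (count_space UNIV) (X 1)"
  shows "AE \<omega> in M. (\<lambda>m. real (card {t\<in>{1..m}. K < X t \<omega>}) / real m)
    \<longlonglongrightarrow> prob {\<omega>\<in>space M. K < X 1 \<omega>}"
proof -
  define Y where "Y t = (\<lambda>\<omega>. of_bool (K < X t \<omega>) :: real)" for t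
  have X_measurable: "X t \<in> M \<rightarrow>\<^sub>M count_space UNIV" if "t \<ge> 1" for t
    using indep that unfolding indep_vars_def by (simp add: Ball_def)
  have "indep_vars (\<lambda>_. borel) Y {1..}"
    unfolding Y_def by (rule indep_vars_compose2[OF indep]) simp
  moreover have "distr M borel (Y t) = distr M borel (Y 1)" if "t \<ge> 1" for t
  proof -
    have "distr M borel (Y s) = distr (distr M (count_space UNIV) (X s)) borel (\<lambda>i. of_bool (K < i))"
      if "s \<ge> 1" for s
      using X_measurable[OF that] by (subst distr_distr) (auto simp: comp_def Y_def)
    then show ?thesis
      using that distr[OF that] by simp
  qed
  moreover have "AE \<omega> in M. Y 1 \<omega> \<in> {0..1}"
    by (simp add: Y_def)
  ultimately have "AE \<omega> in M. (\<lambda>m. (\<Sum>t\<in>{1..m}. Y t \<omega>) / real m) \<longlonglongrightarrow> expectation (Y 1)"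
    by (rule AE_average_tendsto_expectation)
  moreover have "expectation (Y 1) = prob {\<omega>\<in>space M. K < X 1 \<omega>}"
  proof -
    have "expectation (Y 1) = expectation (indicator {\<omega>\<in>space M. K < X 1 \<omega>})"
      by (rule Bochner_Integration.integral_cong) (auto simp: Y_def indicator_def)
    then show ?thesis
      by (simp add: Int_absorb2 subset_eq)
  qed
  moreover have "(\<Sum>t\<in>{1..m}. Y t \<omega>) = real (card {t\<in>{1..m}. K < X t \<omega>})" for m \<omega>
    by (simp add: Y_def Int_def)
  ultimately show ?thesis
    by simp
qed

end

theorem proposition1:
  fixes M :: "'a measure" and \<mu> :: "nat pmf" and X :: "nat \<Rightarrow> 'a \<Rightarrow> nat"
  assumes "prob_space M"
    and "prob_space.indep_vars M (\<lambda>_. count_space UNIV) X {1..}"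
    and "\<And>t. t \<ge> 1 \<Longrightarrow> distr M (count_space UNIV) (X t) = measure_pmf \<mu>"
  shows "(\<forall>m. integrable M (\<lambda>\<omega>. sqrt (half_norm (empirical X m \<omega>)) / sqrt (real m)))
     \<and> (\<lambda>m. \<integral>\<omega>. \<bar>sqrt (half_norm (empirical X m \<omega>)) / sqrt (real m)\<bar> \<partial>M) \<longlonglongrightarrow> 0
     \<and> (AE \<omega> in M. (\<lambda>m. sqrt (half_norm (empirical X m \<omega>)) / sqrt (real m)) \<longlonglongrightarrow> 0)"
proof -
  interpret prob_space M by fact
  let ?F = "\<lambda>m \<omega>. sqrt (half_norm (empirical X m \<omega>)) / sqrt (real m)"
  have X_measurable: "X t \<in> M \<rightarrow>\<^sub>M count_space UNIV" if "t \<ge> 1" for t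
    using assms(2) that unfolding indep_vars_def by (simp add: Ball_def)
  have F_measurable: "?F m \<in> borel_measurable M" for m
    using X_measurable by (rule borel_measurable_empirical_sqrt_half_norm)
  have F_bounded: "AE \<omega> in M. norm (?F m \<omega>) \<le> 2" for m
    unfolding real_norm_def abs_of_nonneg[OF empirical_sqrt_half_norm_nonneg]
    by (intro AE_I2 empirical_sqrt_half_norm_le_2)
  have "AE \<omega> in M. \<forall>K. (\<lambda>m. real (card {t\<in>{1..m}. K < X t \<omega>}) / real m)
      \<longlonglongrightarrow> prob {\<omega>\<in>space M. K < X 1 \<omega>}"
    unfolding AE_all_countable using assms(2,3) by (intro allI AE_tail_frequency_tendsto) simp_all
  then have AE_limit: "AE \<omega> in M. (\<lambda>m. ?F m \<omega>) \<longlonglongrightarrow> 0"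
    by (rule eventually_mono) (rule empirical_sqrt_half_norm_tendsto_zero[OF
        prob_greater_tendsto_zero[OF X_measurable[of 1]]], simp_all)
  moreover have "(\<lambda>m. \<integral>\<omega>. \<bar>?F m \<omega>\<bar> \<partial>M) \<longlonglongrightarrow> 0"
    using F_measurable F_bounded AE_limit by (rule integral_abs_tendsto_zero_if_bounded)
  moreover have "integrable M (?F m)" for m
    using F_bounded F_measurable by (rule integrable_const_bound)
  ultimately show ?thesis
    by simp
qed

end
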